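(* Let $(E,\|\cdot\|)$ be a real Banach space and $\mathcal{C}\subset E$ a closed convex cone with $\mathbb{R}_+\mathcal{C}=\mathcal{C}$ and $\mathcal{C}\cap(-\mathcal{C})=\{0\}$. Assume: (H1) there are $\ell\in E'$ with $\|\ell\|=1$ and $K\in[1,\infty)$ with $\langle\ell,\phi\rangle\ge\frac1K\|\phi\|$ for all $\phi\in\mathcal{C}$; (H2) $\rho\in(0,1]$ is fixed such that $\mathcal{C}(\rho)=\{\phi\in\mathcal{C}:B(\phi,\rho\|\phi\|)\subset\mathcal{C}\}$ contains a nonzero element. Set $\mathcal{C}_{\ell=1}(\rho)=\{\phi\in\mathcal{C}(\rho):\langle\ell,\phi\rangle=1\}$. Let $\mathcal{M}\subset L(E)$ be such that, for some $1\le\vartheta<\infty$ and every $L\in\mathcal{M}$: (H3) $L(\mathcal{C}\setminus\{0\})\subset\mathcal{C}(\rho)\setminus\{0\}$, (H4) $\frac1\vartheta\le\|L\|\le\vartheta$. Let $(\Omega,\mathcal{F},\mathbb{P})$ be a probability space with an invertible, measure-preserving, ergodic map $\tau$, let $X=L^\infty(\Omega,E)$ (uniformly bounded Bochner measurable sections, sup norm), and let $(\mathcal{L}_\omega)_{\omega\in\Omega}$ take values in $\mathcal{M}$ such that $\mathbf{L}:X\to X$, $(\mathbf{L}\boldsymbol{\phi})_\omega=\mathcal{L}_{\tau^{-1}\omega}\phi_{\tau^{-1}\omega}$, preserves Bochner measurability of sections, and assume $\int_\Omega|\log\|\mathcal{L}_\omega\||\,d\mathbb{P}(\omega)<+\infty$.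 Let $\mathbf{f}\in X$ be the unique section with $f_\omega\in\mathcal{C}_{\ell=1}(\rho)$ for all $\omega$ satisfying $f_\omega=\mathcal{L}_{\tau^{-1}\omega}f_{\tau^{-1}\omega}/\langle\ell,\mathcal{L}_{\tau^{-1}\omega}f_{\tau^{-1}\omega}\rangle$ for all $\omega$. Set $p_\omega=\langle\ell,\mathcal{L}_{\tau^{-1}\omega}f_{\tau^{-1}\omega}\rangle$. Then: (1) $\omega\mapsto p_\omega\in(0,\infty)$ is measurable and $\log p$ is $\mathbb{P}$-integrable; (2) for $\mathbb{P}$-almost every $\omega$, the characteristic exponent \[\chi_\omega=\limsup_{n\to\infty}\frac1n\log\|\mathcal{L}_{\tau^{-1}\omega}\circ\cdots\circ\mathcal{L}_{\tau^{-n}\omega}\|\] equals $\int_\Omega\log p_\omega\,d\mathbb{P}(\omega)$.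
   Context: A map $\Omega\to E$ is Bochner measurable if it is a uniform limit of $\mathcal{F}$-measurable maps with countable image. *)

theory Defs
  imports "HOL-Probability.Probability"
begin

definition measure_preserving_map :: "'w measure \<Rightarrow> ('w \<Rightarrow> 'w) \<Rightarrow> bool" where
  "measure_preserving_map M T \<longleftrightarrow> T \<in> measurable M M \<and>
     (\<forall>A\<in>sets M. emeasure M (T -` A \<inter> space M) = emeasure M A)"

definition ergodic_map :: "'w measure \<Rightarrow> ('w \<Rightarrow> 'w) \<Rightarrow> bool" where
  "ergodic_map M T \<longleftrightarrow> (\<forall>A\<in>sets M. T -` A \<inter> space M = A \<longrightarrow>
     measure M A = 0 \<or> measure M A = 1)"

definition bochner_measurable :: "'w measure \<Rightarrow> ('w \<Rightarrow> 'e::real_normed_vector) \<Rightarrow> bool" where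
  "bochner_measurable M f \<longleftrightarrow> (\<exists>g :: nat \<Rightarrow> 'w \<Rightarrow> 'e.
     (\<forall>n. g n \<in> borel_measurable M \<and> countable (g n ` space M)) \<and>
     (\<forall>e>0. \<exists>N. \<forall>n\<ge>N. \<forall>\<omega>\<in>space M. dist (g n \<omega>) (f \<omega>) < e))"

definition Linf_sections :: "'w measure \<Rightarrow> ('w \<Rightarrow> 'e::real_normed_vector) set" where
  "Linf_sections M = {\<phi>. bochner_measurable M \<phi> \<and> bounded (\<phi> ` space M)}"

definition cone_rho :: "'e::real_normed_vector set \<Rightarrow> real \<Rightarrow> 'e set" where
  "cone_rho C \<rho> = {\<phi>\<in>C. ball \<phi> (\<rho> * norm \<phi>) \<subseteq> C}"

definition cone_rho_l1 :: "'e::real_normed_vector set \<Rightarrow> real \<Rightarrow> ('e \<Rightarrow>\<^sub>L real) \<Rightarrow> 'e set" where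
  "cone_rho_l1 C \<rho> l = {\<phi>\<in>cone_rho C \<rho>. blinfun_apply l \<phi> = 1}"

fun cocycle :: "('w \<Rightarrow> ('e::real_normed_vector \<Rightarrow>\<^sub>L 'e)) \<Rightarrow> ('w \<Rightarrow> 'w) \<Rightarrow> nat \<Rightarrow> 'w \<Rightarrow> ('e \<Rightarrow>\<^sub>L 'e)" where
  "cocycle L Ti 0 \<omega> = id_blinfun"
| "cocycle L Ti (Suc n) \<omega> = cocycle L Ti n \<omega> o\<^sub>L L ((Ti ^^ Suc n) \<omega>)"

end

theory Submission
  imports Defs
begin

text \<open>
  Iterating the eigen-relation gives
  \<open>L\<^sup>n f(\<tau>\<^sup>-\<^sup>n \<omega>) = (\<Prod>k<n. p(\<tau>\<^sup>-\<^sup>k \<omega>)) f(\<omega>)\<close>.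
  An operator \<open>G\<close> mapping the cone \<open>C\<close> into itself is controlled by its value at any
  \<open>g \<in> C(\<rho>)\<close> with \<open>l g = 1\<close>: since the ball of radius \<open>\<rho> norm g\<close> around \<open>g\<close> lies in \<open>C\<close>,
  \<open>l (G g) / K \<le> norm G \<le> (6 K / \<rho>) l (G g)\<close>.
  Hence \<open>ln (norm L\<^sup>n)\<close> differs from the Birkhoff sum of \<open>ln p\<close> along \<open>\<tau>\<^sup>-\<^sup>1\<close> by a bounded
  amount (for \<open>n = 1\<close> this also gives the integrability of \<open>ln p\<close>), and Birkhoff's ergodic
  theorem for \<open>\<tau>\<^sup>-\<^sup>1\<close>, which follows from the maximal ergodic inequality, identifies the
  growth rate as the integral of \<open>ln p\<close>.
\<close>

lemma LIMSEQ_of_inverse_Suc_bounds: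
  fixes a :: "nat \<Rightarrow> real"
  assumes "\<And>m. eventually (\<lambda>n. a n < c + inverse (Suc m)) sequentially"
    and "\<And>m. eventually (\<lambda>n. c - inverse (Suc m) < a n) sequentially"
  shows "a \<longlonglongrightarrow> c"
proof (rule order_tendstoI)
  fix y assume "c < y"
  then obtain m where "inverse (Suc m) < y - c"
    using reals_Archimedean[of "y - c"] by auto
  then show "eventually (\<lambda>n. a n < y) sequentially"
    using assms(1)[of m] by (auto elim: eventually_mono)
next
  fix y assume "y < c"
  then obtain m where "inverse (Suc m) < c - y"
    using reals_Archimedean[of "c - y"] by auto
  then show "eventually (\<lambda>n. y < a n) sequentially"
    using assms(2)[of m] by (auto elim: eventually_mono)
qed

lemma limsup_divide_eq_of_bounded_diff:
  fixes a s :: "nat \<Rightarrow> real"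
  assumes bounded: "\<And>n. \<bar>a n - s n\<bar> \<le> D" and lim: "(\<lambda>n. s n / n) \<longlonglongrightarrow> I"
  shows "limsup (\<lambda>n. ereal (a n / n)) = ereal I"
proof -
  have "(\<lambda>n. (a n - s n) / n) \<longlonglongrightarrow> 0"
  proof (rule Lim_null_comparison)
    show "eventually (\<lambda>n. norm ((a n - s n) / n) \<le> D / n) sequentially"
      using bounded by (simp add: divide_right_mono)
  qed (rule lim_const_over_n)
  from tendsto_add[OF lim this] have "(\<lambda>n. a n / n) \<longlonglongrightarrow> I"
    by (simp add: diff_divide_distrib)
  then show ?thesis
    by (intro lim_imp_Limsup) simp_all
qed

lemma abs_ln_diff_le:
  fixes a b c d :: real
  assumes "0 < a" "a \<le> c * b" "b \<le> d * a" "1 \<le> c" "1 \<le> d"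
  shows "\<bar>ln b - ln a\<bar> \<le> ln c + ln d"
proof -
  have "0 < b"
    using assms by (smt (verit) mult_nonneg_nonpos)
  have "ln b \<le> ln (d * a)"
    using assms \<open>0 < b\<close> by simp
  moreover have "ln a \<le> ln (c * b)"
    using assms \<open>0 < b\<close> by simp
  moreover have "ln (d * a) = ln d + ln a" and "ln (c * b) = ln c + ln b"
    using assms \<open>0 < b\<close> by (simp_all add: ln_mult)
  moreover have "0 \<le> ln c" and "0 \<le> ln d"
    using assms by simp_all
  ultimately show ?thesis
    unfolding abs_le_iff by linarith
qed

lemma bochner_measurable_imp_borel_measurable:
  assumes "bochner_measurable M f"
  shows "f \<in> borel_measurable M"
proof -
  obtain g :: "nat \<Rightarrow> _" where g_meas: "\<And>n. g n \<in> borel_measurable M"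
    and g_unif: "\<forall>e>0. \<exists>N. \<forall>n\<ge>N. \<forall>x\<in>space M. dist (g n x) (f x) < e"
    using assms unfolding bochner_measurable_def by blast
  show ?thesis
  proof (rule borel_measurable_LIMSEQ_metric[OF g_meas])
    fix x assume "x \<in> space M"
    then show "(\<lambda>n. g n x) \<longlonglongrightarrow> f x"
      using g_unif unfolding lim_sequentially by metis
  qed
qed

lemma integrable_of_abs_diff_le:
  fixes g u :: "'a \<Rightarrow> real"
  assumes "finite_measure M" and "integrable M (\<lambda>x. \<bar>g x\<bar>)" and "u \<in> borel_measurable M"
    and diff: "\<forall>x\<in>space M. \<bar>g x - u x\<bar> \<le> D"
  shows "integrable M u"
proof (rule Bochner_Integration.integrable_bound)
  show "integrable M (\<lambda>x. \<bar>g x\<bar> + \<bar>D\<bar>)"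
    using assms(1,2) by (simp add: finite_measure.integrable_const)
  show "AE x in M. norm (u x) \<le> norm (\<bar>g x\<bar> + \<bar>D\<bar>)"
    using diff by (intro AE_I2) fastforce
qed fact

section \<open>Birkhoff's ergodic theorem\<close>

lemma measurable_funpow: "T \<in> measurable M M \<Longrightarrow> T ^^ n \<in> measurable M M"
  by (induction n) (simp_all add: measurable_comp)

lemma measure_preserving_map_distr:
  assumes "measure_preserving_map M T"
  shows "distr M M T = M"
proof (rule measure_eqI)
  fix A assume "A \<in> sets (distr M M T)"
  then show "emeasure (distr M M T) A = emeasure M A"
    using assms by (simp add: emeasure_distr measure_preserving_map_def)
qed simp

lemma ergodic_map_left_inverse:
  assumes "ergodic_map M T" and T: "T \<in> measurable M M" and inv: "\<forall>x\<in>space M. S (T x) = x"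
  shows "ergodic_map M S"
  unfolding ergodic_map_def
proof (intro ballI impI)
  fix A assume A: "A \<in> sets M" and S_inv: "S -` A \<inter> space M = A"
  have "T -` A \<inter> space M = A"
  proof (intro set_eqI iffI)
    fix x assume x: "x \<in> T -` A \<inter> space M"
    then have "S (T x) \<in> A"
      using S_inv by blast
    moreover have "S (T x) = x"
      using x inv by simp
    ultimately show "x \<in> A"
      by simp
  next
    fix x assume x: "x \<in> A"
    then have x_space: "x \<in> space M"
      using sets.sets_into_space[OF A] by blast
    then have "T x \<in> S -` A \<inter> space M"
      using x inv measurable_space[OF T] by simp
    then show "x \<in> T -` A \<inter> space M"
      using S_inv x_space by simp
  qed
  then show "measure M A = 0 \<or> measure M A = 1"
    using assms(1) A by (simp add: ergodic_map_def)
qed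

definition birkhoff_sum :: "('a \<Rightarrow> 'a) \<Rightarrow> ('a \<Rightarrow> real) \<Rightarrow> nat \<Rightarrow> 'a \<Rightarrow> real" where
  "birkhoff_sum T h n x = (\<Sum>k<n. h ((T ^^ k) x))"

lemma birkhoff_sum_0 [simp]: "birkhoff_sum T h 0 x = 0"
  by (simp add: birkhoff_sum_def)

lemma birkhoff_sum_Suc: "birkhoff_sum T h (Suc n) x = h x + birkhoff_sum T h n (T x)"
  unfolding birkhoff_sum_def sum.lessThan_Suc_shift by (simp add: funpow_Suc_right del: funpow.simps)

lemma birkhoff_sum_diff_const:
  "birkhoff_sum T (\<lambda>x. h x - c) n x = birkhoff_sum T h n x - real n * c"
  by (simp add: birkhoff_sum_def sum_subtractf)

lemma birkhoff_sum_uminus: "birkhoff_sum T (\<lambda>x. - h x) n x = - birkhoff_sum T h n x"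
  by (simp add: birkhoff_sum_def sum_negf)

lemma birkhoff_sum_bounded_above_comp_iff:
  "(\<exists>B. \<forall>n. birkhoff_sum T h n (T x) \<le> B) \<longleftrightarrow> (\<exists>B. \<forall>n. birkhoff_sum T h n x \<le> B)"
proof
  assume "\<exists>B. \<forall>n. birkhoff_sum T h n (T x) \<le> B"
  then obtain B where "\<forall>n. birkhoff_sum T h n (T x) \<le> B" ..
  then have "birkhoff_sum T h n x \<le> max 0 (h x + B)" for n
    by (cases n) (auto simp: birkhoff_sum_Suc le_max_iff_disj)
  then show "\<exists>B. \<forall>n. birkhoff_sum T h n x \<le> B" by blast
next
  assume "\<exists>B. \<forall>n. birkhoff_sum T h n x \<le> B"
  then obtain B where B: "\<forall>n. birkhoff_sum T h n x \<le> B" ..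
  have "birkhoff_sum T h n (T x) \<le> B - h x" for n
    using B[rule_format, of "Suc n"] by (simp add: birkhoff_sum_Suc)
  then show "\<exists>B. \<forall>n. birkhoff_sum T h n (T x) \<le> B" by blast
qed

fun max_birkhoff_sum :: "('a \<Rightarrow> 'a) \<Rightarrow> ('a \<Rightarrow> real) \<Rightarrow> nat \<Rightarrow> 'a \<Rightarrow> real" where
  "max_birkhoff_sum T h 0 x = 0"
| "max_birkhoff_sum T h (Suc n) x = max (max_birkhoff_sum T h n x) (birkhoff_sum T h (Suc n) x)"

lemma max_birkhoff_sum_nonneg: "0 \<le> max_birkhoff_sum T h n x"
  by (induction n) auto

lemma birkhoff_sum_le_max: "k \<le> n \<Longrightarrow> birkhoff_sum T h k x \<le> max_birkhoff_sum T h n x"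
proof (induction n)
  case (Suc n)
  then show ?case by (cases "k = Suc n") auto
qed simp

lemma max_birkhoff_sum_attained: "\<exists>k\<le>n. max_birkhoff_sum T h n x = birkhoff_sum T h k x"
proof (induction n)
  case (Suc n)
  then obtain k where "k \<le> n" "max_birkhoff_sum T h n x = birkhoff_sum T h k x"
    by blast
  then show ?case
    by (cases "max_birkhoff_sum T h n x \<le> birkhoff_sum T h (Suc n) x")
      (auto simp: max_def intro: le_SucI)
qed simp

lemma max_birkhoff_sum_pos_iff:
  "0 < max_birkhoff_sum T h n x \<longleftrightarrow> (\<exists>k\<le>n. 0 < birkhoff_sum T h k x)"
proof
  assume "0 < max_birkhoff_sum T h n x"
  then show "\<exists>k\<le>n. 0 < birkhoff_sum T h k x"
    using max_birkhoff_sum_attained[of n T h x] by auto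
next
  assume "\<exists>k\<le>n. 0 < birkhoff_sum T h k x"
  then show "0 < max_birkhoff_sum T h n x"
    using birkhoff_sum_le_max[of _ n T h x] by fastforce
qed

lemma max_birkhoff_sum_le_step:
  assumes "0 < max_birkhoff_sum T h n x"
  shows "max_birkhoff_sum T h n x \<le> h x + max_birkhoff_sum T h n (T x)"
proof -
  obtain k where k: "k \<le> n" and max_eq: "max_birkhoff_sum T h n x = birkhoff_sum T h k x"
    using max_birkhoff_sum_attained[of n T h x] by blast
  have "k \<noteq> 0"
    using assms max_eq by (cases k) auto
  then obtain j where j: "k = Suc j"
    using not0_implies_Suc by blast
  have "birkhoff_sum T h j (T x) \<le> max_birkhoff_sum T h n (T x)"
    using k j by (intro birkhoff_sum_le_max) simp
  then show ?thesis
    unfolding max_eq j birkhoff_sum_Suc by simp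
qed

context
  fixes M :: "'a measure" and T :: "'a \<Rightarrow> 'a"
  assumes T_mp: "measure_preserving_map M T"
begin

lemma measure_preserving_map_measurable: "T \<in> measurable M M"
  using T_mp by (simp add: measure_preserving_map_def)

lemma integrable_comp_measure_preserving:
  fixes h :: "'a \<Rightarrow> real"
  assumes "integrable M h"
  shows "integrable M (\<lambda>x. h (T x))"
  using integrable_distr_eq[OF measure_preserving_map_measurable, of h] assms
  by (simp add: measure_preserving_map_distr[OF T_mp])

lemma integral_comp_measure_preserving:
  fixes h :: "'a \<Rightarrow> real"
  assumes "integrable M h"
  shows "(\<integral>x. h (T x) \<partial>M) = (\<integral>x. h x \<partial>M)"
  using integral_distr[OF measure_preserving_map_measurable, of h] assms
  by (simp add: measure_preserving_map_distr[OF T_mp])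

lemma integrable_birkhoff_sum: "integrable M h \<Longrightarrow> integrable M (birkhoff_sum T h n)"
proof -
  assume h: "integrable M h"
  have "integrable M (\<lambda>x. h ((T ^^ k) x))" for k
  proof (induction k)
    case (Suc k)
    from integrable_comp_measure_preserving[OF this] show ?case
      by (simp add: funpow_swap1)
  qed (simp add: h)
  then show ?thesis
    unfolding birkhoff_sum_def by (intro Bochner_Integration.integrable_sum) blast
qed

lemma integrable_max_birkhoff_sum: "integrable M h \<Longrightarrow> integrable M (max_birkhoff_sum T h n)"
proof (induction n)
  case (Suc n)
  then have "integrable M (\<lambda>x. max (max_birkhoff_sum T h n x) (birkhoff_sum T h (Suc n) x))"
    by (intro integrable_max integrable_birkhoff_sum)
  then show ?case by simp
next
  case 0
  have "max_birkhoff_sum T h 0 = (\<lambda>_. 0)"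
    by (rule ext) simp
  then show ?case by simp
qed

lemma maximal_ergodic_inequality_finite:
  assumes h: "integrable M h"
  shows "0 \<le> (\<integral>x. indicator {x\<in>space M. 0 < max_birkhoff_sum T h n x} x * h x \<partial>M)"
proof -
  let ?F = "max_birkhoff_sum T h n" and ?A = "{x\<in>space M. 0 < max_birkhoff_sum T h n x}"
  have F: "integrable M ?F" and F_T: "integrable M (\<lambda>x. ?F (T x))"
    using h by (simp_all add: integrable_max_birkhoff_sum integrable_comp_measure_preserving)
  then have "?A \<in> sets M" by measurable
  have "0 = (\<integral>x. ?F x - ?F (T x) \<partial>M)"
    using F F_T by (simp add: integral_comp_measure_preserving)
  also have "\<dots> \<le> (\<integral>x. indicator ?A x * h x \<partial>M)"
  proof (rule integral_mono)
    show "integrable M (\<lambda>x. indicator ?A x * h x)"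
      using integrable_mult_indicator[OF \<open>?A \<in> sets M\<close> h] by simp
    fix x assume "x \<in> space M"
    then show "?F x - ?F (T x) \<le> indicator ?A x * h x"
      using max_birkhoff_sum_le_step[of T h n x] max_birkhoff_sum_nonneg[of T h n x]
        max_birkhoff_sum_nonneg[of T h n "T x"]
      by (cases "0 < ?F x") auto
  qed (use F F_T in simp)
  finally show ?thesis .
qed

lemma maximal_ergodic_inequality:
  assumes h: "integrable M h"
  shows "0 \<le> (\<integral>x. indicator {x\<in>space M. \<exists>n. 0 < birkhoff_sum T h n x} x * h x \<partial>M)"
proof -
  define B where "B k = {x\<in>space M. 0 < birkhoff_sum T h k x}" for k
  have A_eq: "{x\<in>space M. 0 < max_birkhoff_sum T h n x} = (\<Union>k<Suc n. B k)" for n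
    by (auto simp: B_def max_birkhoff_sum_pos_iff less_Suc_eq_le)
  have "{x\<in>space M. \<exists>n. 0 < birkhoff_sum T h n x} = (\<Union>k. B k)"
    by (auto simp: B_def)
  moreover have [measurable]: "h \<in> borel_measurable M" "B k \<in> sets M" for k
    using h integrable_birkhoff_sum[OF h, of k] by (auto simp: B_def)
  moreover have "(\<lambda>n. \<integral>x. indicator (\<Union>k<Suc n. B k) x * h x \<partial>M)
      \<longlonglongrightarrow> (\<integral>x. indicator (\<Union>k. B k) x * h x \<partial>M)"
  proof (rule integral_dominated_convergence[where w="\<lambda>x. norm (h x)"])
    show "AE x in M. (\<lambda>n. indicator (\<Union>k<Suc n. B k) x * h x)
        \<longlonglongrightarrow> indicator (\<Union>k. B k) x * h x"
      using LIMSEQ_Suc[OF LIMSEQ_indicator_UN] by (intro AE_I2 tendsto_mult_right)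
  qed (use h in \<open>auto split: split_indicator\<close>)
  ultimately show ?thesis
    using maximal_ergodic_inequality_finite[OF h] by (intro LIMSEQ_le_const) (auto simp: A_eq)
qed

lemma birkhoff_sum_bounded_above:
  assumes "prob_space M" and erg: "ergodic_map M T"
    and h: "integrable M h" and neg: "(\<integral>x. h x \<partial>M) < 0"
  shows "AE x in M. \<exists>B. \<forall>n. birkhoff_sum T h n x \<le> B"
proof -
  interpret prob_space M by fact
  have [measurable]: "h \<in> borel_measurable M" "birkhoff_sum T h n \<in> borel_measurable M" for n
    using h integrable_birkhoff_sum[OF h] by auto
  define bounded where "bounded x \<longleftrightarrow> (\<exists>B::nat. \<forall>n. birkhoff_sum T h n x \<le> B)" for x
  have bounded_iff: "bounded x \<longleftrightarrow> (\<exists>B. \<forall>n. birkhoff_sum T h n x \<le> B)" for x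
    unfolding bounded_def by (meson order_trans real_arch_simple of_nat_le_iff)
  \<comment> \<open>The points with unbounded Birkhoff sums form an invariant set; if it had full measure,
    the maximal ergodic inequality would give a nonnegative integral of \<open>h\<close>.
    The bounds in \<open>bounded\<close> range over \<open>nat\<close> to make \<open>E\<close> measurable.\<close>
  define E where "E = {x\<in>space M. \<not> bounded x}"
  have E_sets [measurable]: "E \<in> sets M"
    unfolding E_def bounded_def by measurable
  have bounded_T: "bounded (T x) \<longleftrightarrow> bounded x" for x
    unfolding bounded_iff by (rule birkhoff_sum_bounded_above_comp_iff)
  have "T -` E \<inter> space M = E"
    using measurable_space[OF measure_preserving_map_measurable] by (auto simp: E_def bounded_T)
  then have "measure M E = 0 \<or> measure M E = 1"
    using erg by (simp add: ergodic_map_def)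
  moreover have "measure M E \<noteq> 1"
  proof
    assume "measure M E = 1"
    let ?A = "{x\<in>space M. \<exists>n. 0 < birkhoff_sum T h n x}"
    have "E \<subseteq> ?A"
      by (auto simp: E_def bounded_iff not_le)
    moreover have "?A \<in> sets M"
      by measurable
    ultimately have "prob ?A = 1"
      using finite_measure_mono[of E ?A] prob_le_1[of ?A] \<open>measure M E = 1\<close> by simp
    then have "AE x in M. x \<in> ?A"
      by (rule AE_prob_1)
    then have "(\<integral>x. indicator ?A x * h x \<partial>M) = (\<integral>x. h x \<partial>M)"
      by (intro integral_cong_AE) (measurable, measurable, auto)
    then show False
      using maximal_ergodic_inequality[OF h] neg by simp
  qed
  ultimately have "E \<in> null_sets M"
    by (simp add: emeasure_eq_measure null_sets_def)
  then show ?thesis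
    by (rule AE_I') (auto simp: E_def bounded_iff)
qed

lemma birkhoff_average_eventually_less:
  assumes "prob_space M" and erg: "ergodic_map M T"
    and h: "integrable M h" and less: "(\<integral>x. h x \<partial>M) < c"
  shows "AE x in M. eventually (\<lambda>n. birkhoff_sum T h n x / n < c) sequentially"
proof -
  interpret prob_space M by fact
  define c' where "c' = ((\<integral>x. h x \<partial>M) + c) / 2"
  have "(\<integral>x. h x - c' \<partial>M) < 0"
    using h less by (simp add: c'_def prob_space)
  then have "AE x in M. \<exists>B. \<forall>n. birkhoff_sum T (\<lambda>x. h x - c') n x \<le> B"
    using h by (intro birkhoff_sum_bounded_above[OF assms(1) erg]) auto
  then show ?thesis
  proof eventually_elim
    case (elim x)
    then obtain B where B: "birkhoff_sum T h n x \<le> real n * c' + B" for n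
      by (auto simp: birkhoff_sum_diff_const algebra_simps)
    have "c' < c"
      using less by (simp add: c'_def)
    then have "eventually (\<lambda>n. B / real n < c - c') sequentially"
      by (intro order_tendstoD(2)[OF lim_const_over_n]) simp
    then show ?case
      using eventually_gt_at_top[of 0]
    proof eventually_elim
      case (elim n)
      then have "birkhoff_sum T h n x / n \<le> c' + B / n"
        using B[of n] by (simp add: field_simps)
      then show ?case
        using elim by simp
    qed
  qed
qed

theorem birkhoff_ergodic_theorem:
  assumes "prob_space M" and "ergodic_map M T" and h: "integrable M h"
  shows "AE x in M. (\<lambda>n. birkhoff_sum T h n x / n) \<longlonglongrightarrow> (\<integral>x. h x \<partial>M)"
proof -
  let ?I = "\<integral>x. h x \<partial>M"
  have "AE x in M. \<forall>m::nat. eventually (\<lambda>n. birkhoff_sum T h n x / n < ?I + inverse (Suc m)) sequentially"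
    unfolding AE_all_countable by (intro allI birkhoff_average_eventually_less[OF assms]) simp
  moreover have "AE x in M. \<forall>m::nat.
      eventually (\<lambda>n. birkhoff_sum T (\<lambda>x. - h x) n x / n < - ?I + inverse (Suc m)) sequentially"
    unfolding AE_all_countable using h by (intro allI birkhoff_average_eventually_less[OF assms(1,2)]) auto
  ultimately show ?thesis
  proof eventually_elim
    case (elim x)
    show ?case
    proof (rule LIMSEQ_of_inverse_Suc_bounds)
      show "eventually (\<lambda>n. ?I - inverse (Suc m) < birkhoff_sum T h n x / n) sequentially" for m
        using elim(2)[rule_format, of m] by eventually_elim (simp add: birkhoff_sum_uminus)
    qed (use elim(1) in blast)
  qed
qed

lemma AE_limsup_eq_integral_of_bounded_diff:
  fixes a :: "nat \<Rightarrow> 'a \<Rightarrow> real"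
  assumes "prob_space M" and "ergodic_map M T" and "integrable M h"
    and bounded: "\<forall>x\<in>space M. \<forall>n. \<bar>a n x - birkhoff_sum T h n x\<bar> \<le> D"
  shows "AE x in M. limsup (\<lambda>n. ereal (a n x / n)) = ereal (\<integral>x. h x \<partial>M)"
  using birkhoff_ergodic_theorem[OF assms(1-3)] AE_space
proof eventually_elim
  case (elim x)
  then show ?case
    using bounded by (intro limsup_divide_eq_of_bounded_diff) auto
qed

end

section \<open>Operators preserving a cone\<close>

lemma functional_apply_pos_of_cone_map:
  fixes l :: "'e::real_normed_vector \<Rightarrow>\<^sub>L real" and T :: "'e \<Rightarrow>\<^sub>L 'e"
  assumes K: "0 < K" and l_ge: "\<forall>\<phi>\<in>C. blinfun_apply l \<phi> \<ge> norm \<phi> / K"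
    and T: "blinfun_apply T ` (C - {0}) \<subseteq> cone_rho C \<rho> - {0}" and x: "x \<in> C" "x \<noteq> 0"
  shows "0 < l (T x)"
proof -
  have "T x \<in> C" and "T x \<noteq> 0"
    using T x by (auto simp: cone_rho_def)
  then have "0 < norm (T x) / K"
    using K by simp
  also have "\<dots> \<le> l (T x)"
    using l_ge \<open>T x \<in> C\<close> by blast
  finally show ?thesis .
qed

lemma norm_apply_le_of_cone_rho:
  fixes C :: "'e::real_normed_vector set" and G :: "'e \<Rightarrow>\<^sub>L 'e" and l :: "'e \<Rightarrow>\<^sub>L real"
  assumes scale: "\<forall>x\<in>C. \<forall>c\<ge>0. c *\<^sub>R x \<in> C" and K: "0 < K"
    and l_ge: "\<forall>\<phi>\<in>C. blinfun_apply l \<phi> \<ge> norm \<phi> / K"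
    and G_C: "blinfun_apply G ` C \<subseteq> C"
    and \<rho>: "0 < \<rho>" and g: "g \<in> cone_rho C \<rho>" "g \<noteq> 0" and x: "x \<noteq> 0"
  shows "norm (G x) \<le> 6 * K / (\<rho> * norm g) * l (G g) * norm x"
proof -
  have g_C: "g \<in> C" and ball_C: "ball g (\<rho> * norm g) \<subseteq> C"
    using g by (auto simp: cone_rho_def)
  have norm_le: "norm y \<le> K * l y" if "y \<in> C" for y
    using l_ge that K by (auto simp: pos_divide_le_eq mult.commute)
  \<comment> \<open>With this \<open>s\<close>, \<open>g \<plusminus> x / s\<close> lies in the ball of radius \<open>\<rho> * norm g\<close> around \<open>g\<close>,
    so \<open>s g \<plusminus> x \<in> C\<close>; the constant 6 is 2 (from this radius) times 3 (from the triangle inequality).\<close>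
  define s where "s = 2 * norm x / (\<rho> * norm g)"
  have s: "0 < s"
    using x \<rho> g(2) by (simp add: s_def)
  have shift_C: "s *\<^sub>R g + y \<in> C" if "norm y = norm x" for y
  proof -
    have "norm ((1 / s) *\<^sub>R y) < \<rho> * norm g"
      using that s x \<rho> g(2) by (simp add: s_def)
    then have "g + (1 / s) *\<^sub>R y \<in> C"
      using ball_C by (auto simp: dist_norm)
    then have "s *\<^sub>R (g + (1 / s) *\<^sub>R y) \<in> C"
      using scale s by simp
    then show ?thesis
      using s by (simp add: scaleR_add_right)
  qed
  have l_nonneg: "0 \<le> l y" if "y \<in> C" for y
    using norm_le[OF that] K by (smt (verit) norm_ge_zero zero_le_mult_iff)
  have "0 \<le> l (G (s *\<^sub>R g - x))"
    using l_nonneg G_C shift_C[of "- x"] by auto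
  then have lGx: "l (G x) \<le> s * l (G g)"
    by (simp add: blinfun.diff_right blinfun.scaleR_right)
  have "G (s *\<^sub>R g + x) \<in> C"
    using G_C shift_C[of x] by auto
  from norm_le[OF this] have "norm (G (s *\<^sub>R g + x)) \<le> K * (s * l (G g) + l (G x))"
    by (simp add: blinfun.add_right blinfun.scaleR_right)
  moreover have "norm (G g) \<le> K * l (G g)"
    using G_C g_C norm_le by blast
  moreover have "norm (G x) \<le> norm (G (s *\<^sub>R g + x)) + s * norm (G g)"
    using norm_triangle_ineq4[of "G (s *\<^sub>R g + x)" "s *\<^sub>R G g"] s
    by (simp add: blinfun.add_right blinfun.scaleR_right)
  ultimately have "norm (G x) \<le> K * (s * l (G g) + l (G x)) + s * (K * l (G g))"
    using s by (smt (verit) mult_left_mono)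
  also have "\<dots> \<le> 3 * K * s * l (G g)"
    using mult_left_mono[OF lGx, of K] K by (simp add: algebra_simps)
  also have "\<dots> = 6 * K / (\<rho> * norm g) * l (G g) * norm x"
    by (simp add: s_def)
  finally show ?thesis .
qed

lemma norm_mult_le_of_cone_rho:
  fixes C :: "'e::real_normed_vector set" and G :: "'e \<Rightarrow>\<^sub>L 'e" and l :: "'e \<Rightarrow>\<^sub>L real"
  assumes scale: "\<forall>x\<in>C. \<forall>c\<ge>0. c *\<^sub>R x \<in> C" and K: "0 < K"
    and l_ge: "\<forall>\<phi>\<in>C. blinfun_apply l \<phi> \<ge> norm \<phi> / K"
    and G_C: "blinfun_apply G ` C \<subseteq> C"
    and \<rho>: "0 < \<rho>" and g: "g \<in> cone_rho C \<rho>" "g \<noteq> 0"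
  shows "norm G * norm g \<le> 6 * K / \<rho> * l (G g)"
proof -
  have "norm (G g) \<le> K * l (G g)"
    using G_C g l_ge K by (force simp: cone_rho_def pos_divide_le_eq mult.commute)
  then have "0 \<le> l (G g)"
    using K by (smt (verit) norm_ge_zero zero_le_mult_iff)
  then have "norm G \<le> 6 * K / (\<rho> * norm g) * l (G g)"
  proof (intro norm_blinfun_bound)
    show "norm (G x) \<le> 6 * K / (\<rho> * norm g) * l (G g) * norm x" for x
      using norm_apply_le_of_cone_rho[OF scale K l_ge G_C \<rho> g, of x] by (cases "x = 0") simp_all
  qed (use K \<rho> in simp)
  then show ?thesis
    using \<rho> g(2) by (simp add: field_simps)
qed

lemma norm_blinfun_bounds_of_cone_rho:
  fixes C :: "'e::real_normed_vector set" and G :: "'e \<Rightarrow>\<^sub>L 'e" and l :: "'e \<Rightarrow>\<^sub>L real"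
  assumes scale: "\<forall>x\<in>C. \<forall>c\<ge>0. c *\<^sub>R x \<in> C" and K: "0 < K"
    and l_ge: "\<forall>\<phi>\<in>C. blinfun_apply l \<phi> \<ge> norm \<phi> / K" and l_norm: "norm l \<le> 1"
    and G_C: "blinfun_apply G ` C \<subseteq> C"
    and \<rho>: "0 < \<rho>" and g: "g \<in> cone_rho C \<rho>" and l_g: "l g = 1"
  shows "l (G g) \<le> K * norm G" and "norm G \<le> 6 * K / \<rho> * l (G g)"
proof -
  have g_C: "g \<in> C"
    using g by (simp add: cone_rho_def)
  have "1 \<le> norm l * norm g"
    using norm_blinfun[of l g] l_g by simp
  moreover have "norm l * norm g \<le> norm g"
    using l_norm by (simp add: mult_left_le_one_le)
  ultimately have norm_g: "1 \<le> norm g"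
    by linarith
  have "norm g \<le> K"
    using l_ge g_C l_g K by (auto simp: pos_divide_le_eq)
  have "l (G g) \<le> norm l * norm (G g)"
    using norm_blinfun[of l "G g"] by simp
  also have "\<dots> \<le> norm G * norm g"
    using l_norm norm_blinfun[of G g] by (smt (verit) mult_left_le_one_le norm_ge_zero)
  also have "\<dots> \<le> K * norm G"
    using mult_right_mono[OF \<open>norm g \<le> K\<close> norm_ge_zero[of G]] by (metis mult.commute)
  finally show "l (G g) \<le> K * norm G" .
  have "norm G \<le> norm G * norm g"
    using norm_g by (simp add: mult_le_cancel_left1)
  also have "\<dots> \<le> 6 * K / \<rho> * l (G g)"
    using norm_g by (intro norm_mult_le_of_cone_rho[OF scale K l_ge G_C \<rho> g]) auto
  finally show "norm G \<le> 6 * K / \<rho> * l (G g)" .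
qed

lemma cocycle_maps_cone:
  assumes "\<forall>k. blinfun_apply (L ((Ti ^^ k) \<omega>)) ` C \<subseteq> C"
  shows "blinfun_apply (cocycle L Ti n \<omega>) ` C \<subseteq> C"
proof (induction n)
  case (Suc n)
  have "blinfun_apply (L ((Ti ^^ Suc n) \<omega>)) ` C \<subseteq> C"
    using assms by blast
  with Suc show ?case
    by (auto simp del: funpow.simps)
qed simp

lemma cocycle_apply_eigenvector:
  fixes L :: "'w \<Rightarrow> ('e::real_normed_vector \<Rightarrow>\<^sub>L 'e)"
  assumes "\<forall>k. L ((Ti ^^ Suc k) \<omega>) (f ((Ti ^^ Suc k) \<omega>)) = q ((Ti ^^ k) \<omega>) *\<^sub>R f ((Ti ^^ k) \<omega>)"
  shows "cocycle L Ti n \<omega> (f ((Ti ^^ n) \<omega>)) = (\<Prod>k<n. q ((Ti ^^ k) \<omega>)) *\<^sub>R f \<omega>"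
proof (induction n)
  case (Suc n)
  have "cocycle L Ti (Suc n) \<omega> (f ((Ti ^^ Suc n) \<omega>))
      = cocycle L Ti n \<omega> (q ((Ti ^^ n) \<omega>) *\<^sub>R f ((Ti ^^ n) \<omega>))"
    using assms by (simp del: funpow.simps)
  also have "\<dots> = (\<Prod>k<Suc n. q ((Ti ^^ k) \<omega>)) *\<^sub>R f \<omega>"
    by (simp add: blinfun.scaleR_right Suc.IH mult.commute del: funpow.simps)
  finally show ?case .
qed simp

lemma cocycle_Suc_0: "cocycle L Ti (Suc 0) \<omega> = L (Ti \<omega>)"
  by (rule blinfun_eqI) simp

lemma abs_ln_norm_cocycle_diff_le:
  fixes C :: "'e::real_normed_vector set" and l :: "'e \<Rightarrow>\<^sub>L real"
    and L :: "'w \<Rightarrow> ('e \<Rightarrow>\<^sub>L 'e)" and f :: "'w \<Rightarrow> 'e"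
  assumes scale: "\<forall>x\<in>C. \<forall>c\<ge>0. c *\<^sub>R x \<in> C" and K: "1 \<le> K"
    and l_ge: "\<forall>\<phi>\<in>C. blinfun_apply l \<phi> \<ge> norm \<phi> / K" and l_norm: "norm l \<le> 1"
    and \<rho>: "0 < \<rho>" "\<rho> \<le> 1"
    and S: "\<omega> \<in> S" "\<forall>v\<in>S. Ti v \<in> S"
    and L_C: "\<forall>v\<in>S. blinfun_apply (L v) ` C \<subseteq> C"
    and f_cone: "\<forall>v\<in>S. f v \<in> cone_rho C \<rho> \<and> l (f v) = 1"
    and q_pos: "\<forall>v\<in>S. 0 < q v"
    and eigen: "\<forall>v\<in>S. L (Ti v) (f (Ti v)) = q v *\<^sub>R f v"
  shows "\<bar>ln (norm (cocycle L Ti n \<omega>)) - birkhoff_sum Ti (\<lambda>v. ln (q v)) n \<omega>\<bar>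
           \<le> ln K + ln (6 * K / \<rho>)"
proof -
  have orbit: "(Ti ^^ k) \<omega> \<in> S" for k
    by (induction k) (use S in auto)
  define Q where "Q = (\<Prod>k<n. q ((Ti ^^ k) \<omega>))"
  have "cocycle L Ti n \<omega> (f ((Ti ^^ n) \<omega>)) = Q *\<^sub>R f \<omega>"
    unfolding Q_def using eigen orbit by (intro cocycle_apply_eigenvector) simp
  then have "l (cocycle L Ti n \<omega> (f ((Ti ^^ n) \<omega>))) = Q"
    using f_cone S(1) by (simp add: blinfun.scaleR_right)
  moreover have "blinfun_apply (cocycle L Ti n \<omega>) ` C \<subseteq> C"
    using L_C orbit by (intro cocycle_maps_cone) blast
  moreover note norm_blinfun_bounds_of_cone_rho[OF scale _ l_ge l_norm _ \<rho>(1)]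
  ultimately have "Q \<le> K * norm (cocycle L Ti n \<omega>)" and "norm (cocycle L Ti n \<omega>) \<le> 6 * K / \<rho> * Q"
    using f_cone orbit K by auto
  moreover have "0 < Q"
    using q_pos orbit by (simp add: Q_def prod_pos)
  moreover have "ln Q = birkhoff_sum Ti (\<lambda>v. ln (q v)) n \<omega>"
    using q_pos orbit by (simp add: Q_def birkhoff_sum_def ln_prod less_imp_neq[symmetric])
  ultimately show ?thesis
    using K \<rho> abs_ln_diff_le[of Q K "norm (cocycle L Ti n \<omega>)" "6 * K / \<rho>"]
    by (simp add: field_simps)
qed

theorem theorem2p2:
  fixes C :: "'e::banach set" and l :: "'e \<Rightarrow>\<^sub>L real" and K \<rho> \<theta> :: real
    and Ms :: "('e \<Rightarrow>\<^sub>L 'e) set"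
    and P :: "'w measure" and \<tau> \<tau>i :: "'w \<Rightarrow> 'w"
    and L :: "'w \<Rightarrow> ('e \<Rightarrow>\<^sub>L 'e)" and f :: "'w \<Rightarrow> 'e"
  assumes cone_closed: "closed C" and cone_convex: "convex C"
    and cone_scale: "\<forall>x\<in>C. \<forall>c\<ge>0. c *\<^sub>R x \<in> C"
    and cone_pointed: "C \<inter> uminus ` C = {0}"
    and H1: "norm l = 1" "K \<ge> 1" "\<forall>\<phi>\<in>C. blinfun_apply l \<phi> \<ge> norm \<phi> / K"
    and H2: "0 < \<rho>" "\<rho> \<le> 1" "\<exists>\<phi>\<in>cone_rho C \<rho>. \<phi> \<noteq> 0"
    and theta: "1 \<le> \<theta>"
    and H3: "\<forall>T\<in>Ms. blinfun_apply T ` (C - {0}) \<subseteq> cone_rho C \<rho> - {0}"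
    and H4: "\<forall>T\<in>Ms. 1 / \<theta> \<le> norm T \<and> norm T \<le> \<theta>"
    and prob: "prob_space P"
    and tau_mp: "measure_preserving_map P \<tau>" and taui_mp: "measure_preserving_map P \<tau>i"
    and tau_inv: "\<forall>\<omega>\<in>space P. \<tau>i (\<tau> \<omega>) = \<omega> \<and> \<tau> (\<tau>i \<omega>) = \<omega>"
    and tau_erg: "ergodic_map P \<tau>"
    and L_in: "\<forall>\<omega>\<in>space P. L \<omega> \<in> Ms"
    and L_meas: "\<forall>\<phi>\<in>Linf_sections P.
        bochner_measurable P (\<lambda>\<omega>. blinfun_apply (L (\<tau>i \<omega>)) (\<phi> (\<tau>i \<omega>)))"
    and L_int: "integrable P (\<lambda>\<omega>. \<bar>ln (norm (L \<omega>))\<bar>)"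
    and f_X: "f \<in> Linf_sections P"
    and f_cone: "\<forall>\<omega>\<in>space P. f \<omega> \<in> cone_rho_l1 C \<rho> l"
    and f_eq: "\<forall>\<omega>\<in>space P. f \<omega> =
        (1 / blinfun_apply l (blinfun_apply (L (\<tau>i \<omega>)) (f (\<tau>i \<omega>))))
          *\<^sub>R blinfun_apply (L (\<tau>i \<omega>)) (f (\<tau>i \<omega>))"
  defines "p \<equiv> (\<lambda>\<omega>. blinfun_apply l (blinfun_apply (L (\<tau>i \<omega>)) (f (\<tau>i \<omega>))))"
  shows "(\<forall>\<omega>\<in>space P. p \<omega> > 0) \<and> p \<in> borel_measurable P
         \<and> integrable P (\<lambda>\<omega>. ln (p \<omega>))
         \<and> (AE \<omega> in P. limsup (\<lambda>n. ereal (ln (norm (cocycle L \<tau>i n \<omega>)) / real n))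
                          = ereal (\<integral>\<omega>. ln (p \<omega>) \<partial>P))"
proof -
  interpret prob_space P by (rule prob)
  have \<tau>i_space: "\<forall>\<omega>\<in>space P. \<tau>i \<omega> \<in> space P"
    using measurable_space[OF measure_preserving_map_measurable[OF taui_mp]] by blast
  have l_norm: "norm l \<le> 1"
    using H1(1) by simp
  have f_cone': "\<forall>\<omega>\<in>space P. f \<omega> \<in> cone_rho C \<rho> \<and> l (f \<omega>) = 1"
    using f_cone by (auto simp: cone_rho_l1_def)
  have L_C: "\<forall>\<omega>\<in>space P. blinfun_apply (L \<omega>) ` C \<subseteq> C"
    using H3 L_in cone_pointed by (fastforce simp: cone_rho_def)
  have p_pos: "\<forall>\<omega>\<in>space P. 0 < p \<omega>"
  proof
    fix \<omega> assume "\<omega> \<in> space P"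
    then have "\<tau>i \<omega> \<in> space P"
      using \<tau>i_space by blast
    then have "f (\<tau>i \<omega>) \<in> C" and "f (\<tau>i \<omega>) \<noteq> 0" and "L (\<tau>i \<omega>) \<in> Ms"
      using f_cone' L_in by (force simp: cone_rho_def blinfun.zero_right)+
    then show "0 < p \<omega>"
      unfolding p_def using H3 by (intro functional_apply_pos_of_cone_map[OF _ H1(3)]) (use H1(2) in auto)
  qed
  have eigen: "\<forall>\<omega>\<in>space P. L (\<tau>i \<omega>) (f (\<tau>i \<omega>)) = p \<omega> *\<^sub>R f \<omega>"
  proof
    fix \<omega> assume "\<omega> \<in> space P"
    then have "f \<omega> = (1 / p \<omega>) *\<^sub>R L (\<tau>i \<omega>) (f (\<tau>i \<omega>))" and "0 < p \<omega>"
      using f_eq p_pos unfolding p_def by blast+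
    then show "L (\<tau>i \<omega>) (f (\<tau>i \<omega>)) = p \<omega> *\<^sub>R f \<omega>"
      by simp
  qed
  define D where "D = ln K + ln (6 * K / \<rho>)"
  have cocycle_close: "\<forall>\<omega>\<in>space P. \<forall>n.
      \<bar>ln (norm (cocycle L \<tau>i n \<omega>)) - birkhoff_sum \<tau>i (\<lambda>\<omega>. ln (p \<omega>)) n \<omega>\<bar> \<le> D"
    unfolding D_def using abs_ln_norm_cocycle_diff_le[OF cone_scale H1(2,3) l_norm H2(1,2) _ \<tau>i_space
        L_C f_cone' p_pos eigen] by blast
  have "(\<lambda>\<omega>. L (\<tau>i \<omega>) (f (\<tau>i \<omega>))) \<in> borel_measurable P"
    using L_meas f_X by (simp add: bochner_measurable_imp_borel_measurable)
  then have p_meas: "p \<in> borel_measurable P"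
    unfolding p_def by (rule borel_measurable_continuous_on[OF linear_continuous_on[OF blinfun.bounded_linear_right]])
  have "\<forall>\<omega>\<in>space P. \<bar>ln (norm (L (\<tau>i \<omega>))) - ln (p \<omega>)\<bar> \<le> D"
  proof
    fix \<omega> assume "\<omega> \<in> space P"
    from cocycle_close[rule_format, OF this, of "Suc 0"]
    show "\<bar>ln (norm (L (\<tau>i \<omega>))) - ln (p \<omega>)\<bar> \<le> D"
      unfolding cocycle_Suc_0 by (simp add: birkhoff_sum_Suc)
  qed
  then have ln_p_int: "integrable P (\<lambda>\<omega>. ln (p \<omega>))"
    by (rule integrable_of_abs_diff_le[OF finite_measure_axioms
          integrable_comp_measure_preserving[OF taui_mp L_int] borel_measurable_ln[OF p_meas]])
  have "ergodic_map P \<tau>i"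
    using tau_inv by (intro ergodic_map_left_inverse[OF tau_erg measure_preserving_map_measurable[OF tau_mp]]) blast
  with p_pos p_meas ln_p_int show ?thesis
    using AE_limsup_eq_integral_of_bounded_diff[OF taui_mp prob _ ln_p_int cocycle_close] by blast
qed

end
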